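(* Let $\boldsymbol{\psi}=(\psi_k)_{k\in\mathbb{K}}$ be a regularization of $\psi:\mathcal{M}\to\Theta$ which is continuous at the data-generating distribution $P\in\mathcal{M}$ with respect to a distance $d$, with moduli $(\delta_k)_{k\in\mathbb{K}}$, and let $(r_n)$ be a real-valued positive diverging sequence with $d(P_n,P)=o_P(r_n^{-1})$. Suppose $k\mapsto\|\psi_k(P)-\psi(P)\|_\Theta$ is continuous and non-increasing and, for each $n$, $k\mapsto\delta_k(r_n^{-1})$ is continuous and non-decreasing. For each $n$ let $\mathcal{G}_n$ be a finite subset of $\mathbb{K}$, let $$\mathcal{L}_n=\{k\in\mathcal{G}_n:\ \|\psi_k(P_n)-\psi_{k'}(P_n)\|_\Theta\le4\delta_{k'}(r_n^{-1})\ \forall k'\ge k,\ k'\in\mathcal{G}_n\}$$ and $\tilde k_n(r_n)=\min\mathcal{L}_n$. Then $$\|\psi_{\tilde k_n(r_n)}(P_n)-\psi(P)\|_\Theta=O_P\left(\inf_{k\in\mathcal{G}_n}\{\delta_k(r_n^{-1})+\|\psi_k(P)-\psi(P)\|_\Theta\}\right).$$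
   Context: Setting: $\mathbb{Z}\subseteq\mathbb{R}^d$; data IID with law $P$; $\mathbf{P}$ the product probability on $\mathbb{Z}^\infty$ (to which $o_P,O_P$ refer); $ca(\mathbb{Z})$ signed Borel measures of finite variation; $\mathcal{D}$ discretely supported probability measures; $P_n$ the empirical distribution. $\mathcal{M}$ a set of Borel probability measures, $(\Theta,\|\cdot\|_\Theta)$ a normed space, $\mathbb{K}\subseteq\mathbb{R}_+$ unbounded above. A regularization is a family $(\psi_k)_{k\in\mathbb{K}}$, $\psi_k:\mathbb{D}_\psi\subseteq ca(\mathbb{Z})\to\Theta$, $\mathbb{D}_\psi\supseteq\mathcal{M}\cup\mathcal{D}$, with $\|\psi_k(Q)-\psi(Q)\|_\Theta\to0$ for all $Q\in\mathcal{M}$. A modulus of continuity is a continuous non-decreasing $f:\mathbb{R}_+\to\mathbb{R}_+$ with $f(t)=0$ iff $t=0$; continuity at $P$ w.r.t. $d$ means moduli $(\delta_k)$ with $\|\psi_k(P')-\psi_k(P)\|_\Theta\le\delta_k(d(P',P))$ for all $k$ and $P'\in\mathbb{D}_\psi$. *)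

theory Defs
  imports "HOL-Probability.Probability"
begin

abbreviation borelZ :: "'a::euclidean_space set \<Rightarrow> 'a measure" where
  "borelZ Z \<equiv> restrict_space borel Z"

text \<open>Signed measures are represented as real-valued set functions on the
Borel sets of Z (zero outside the sigma-algebra).  ca Z is the set of countably
additive set functions of finite variation.\<close>
definition ca :: "'a::euclidean_space set \<Rightarrow> ('a set \<Rightarrow> real) set" where
  "ca Z = {\<mu>. (\<forall>A. A \<notin> sets (borelZ Z) \<longrightarrow> \<mu> A = 0) \<and> \<mu> {} = 0 \<and>
     (\<forall>F::nat \<Rightarrow> 'a set. range F \<subseteq> sets (borelZ Z) \<longrightarrow> disjoint_family F \<longrightarrow>
        (\<lambda>i. \<mu> (F i)) sums \<mu> (\<Union>i. F i)) \<and>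
     (\<exists>B. \<forall>(F::nat \<Rightarrow> 'a set) n. range F \<subseteq> sets (borelZ Z) \<longrightarrow> disjoint_family F \<longrightarrow>
        (\<Sum>i<n. \<bar>\<mu> (F i)\<bar>) \<le> B)}"

definition setfun :: "'a measure \<Rightarrow> ('a set \<Rightarrow> real)" where
  "setfun Q = measure Q"

definition discrete_probs :: "'a::euclidean_space set \<Rightarrow> ('a set \<Rightarrow> real) set" where
  "discrete_probs Z = {\<mu>. \<exists>S w. countable S \<and> S \<subseteq> Z \<and> (\<forall>x\<in>S. w x > (0::real)) \<and>
     (w has_sum 1) S \<and>
     \<mu> = (\<lambda>A. if A \<in> sets (borelZ Z) then infsum w (S \<inter> A) else 0)}"

definition empirical :: "'a::euclidean_space set \<Rightarrow> (nat \<Rightarrow> 'a) \<Rightarrow> nat \<Rightarrow> ('a set \<Rightarrow> real)" where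
  "empirical Z \<omega> n = (\<lambda>A. if A \<in> sets (borelZ Z)
      then real (card {i. i < n \<and> \<omega> i \<in> A}) / real n else 0)"

definition modulus :: "(real \<Rightarrow> real) \<Rightarrow> bool" where
  "modulus f \<longleftrightarrow> continuous_on {0..} f \<and> mono_on {0..} f \<and> (\<forall>t\<ge>0. f t \<ge> 0) \<and>
     (\<forall>t\<ge>0. f t = 0 \<longleftrightarrow> t = 0)"

text \<open>Outer probability (so that o_P / O_P make sense without measurability).\<close>
definition outer_prob :: "'b measure \<Rightarrow> 'b set \<Rightarrow> real" where
  "outer_prob M A = Inf {measure M B | B. B \<in> sets M \<and> A \<subseteq> B}"

definition small_oP :: "'b measure \<Rightarrow> (nat \<Rightarrow> 'b \<Rightarrow> real) \<Rightarrow> (nat \<Rightarrow> real) \<Rightarrow> bool" where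
  "small_oP M X a \<longleftrightarrow> (\<forall>\<epsilon>>0. \<forall>\<eta>>0. \<exists>N. \<forall>n\<ge>N.
      outer_prob M {\<omega>\<in>space M. \<bar>X n \<omega>\<bar> > \<epsilon> * a n} < \<eta>)"

definition big_OP :: "'b measure \<Rightarrow> (nat \<Rightarrow> 'b \<Rightarrow> real) \<Rightarrow> (nat \<Rightarrow> real) \<Rightarrow> bool" where
  "big_OP M X a \<longleftrightarrow> (\<forall>\<eta>>0. \<exists>C. \<exists>N. \<forall>n\<ge>N.
      outer_prob M {\<omega>\<in>space M. \<bar>X n \<omega>\<bar> > C * a n} < \<eta>)"

definition Lset :: "real set \<Rightarrow> (real \<Rightarrow> 'm \<Rightarrow> 't::real_normed_vector) \<Rightarrow>
    (real \<Rightarrow> real \<Rightarrow> real) \<Rightarrow> real \<Rightarrow> 'm \<Rightarrow> real set" where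
  "Lset G \<psi> \<delta> r Q = {k\<in>G. \<forall>k'\<in>G. k' \<ge> k \<longrightarrow>
      norm (\<psi> k Q - \<psi> k' Q) \<le> 4 * \<delta> k' (inverse r)}"

definition ktilde :: "real set \<Rightarrow> (real \<Rightarrow> 'm \<Rightarrow> 't::real_normed_vector) \<Rightarrow>
    (real \<Rightarrow> real \<Rightarrow> real) \<Rightarrow> real \<Rightarrow> 'm \<Rightarrow> real" where
  "ktilde G \<psi> \<delta> r Q = Min (Lset G \<psi> \<delta> r Q)"

end

theory Submission
  imports Defs
begin

text \<open>On the event d(P_n, P) \<le> r_n^{-1}, which by the rate assumption has probability
tending to one, every estimate is within \<delta>_k(r_n^{-1}) of its population counterpart.
Lepski's argument is then purely deterministic: let k* attain the oracle trade-off, and let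
m be the largest index beyond k* whose modulus is still at most the bias at k*.  The triangle
inequality through \<psi>(P) shows that m passes all pairwise tests, so the selected index is at
most m; comparing the selected estimate with the one at k* (if it lies below k*) or with
\<psi>(P) (if it lies between k* and m) bounds the error by five times the oracle value.\<close>

lemma modulus_mono:
  assumes "modulus f" "0 \<le> s" "s \<le> t"
  shows "f s \<le> f t"
  using assms unfolding modulus_def by (auto intro: mono_onD)

lemma norm_diff_le_via_common_target:
  fixes x y u v t :: "'t::real_normed_vector"
  shows "norm (x - y) \<le> norm (x - u) + norm (u - t) + norm (v - t) + norm (y - v)"
proof -
  have "norm (x - y) \<le> norm (x - u) + norm (u - y)"
    by (rule norm_diff_triangle_le) (rule order_refl)+
  moreover have "norm (u - y) \<le> norm (u - t) + norm (t - y)"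
    by (rule norm_diff_triangle_le) (rule order_refl)+
  moreover have "norm (t - y) \<le> norm (t - v) + norm (v - y)"
    by (rule norm_diff_triangle_le) (rule order_refl)+
  ultimately show ?thesis by (simp add: norm_minus_commute)
qed

definition lepski_set :: "real set \<Rightarrow> (real \<Rightarrow> 't::real_normed_vector) \<Rightarrow> (real \<Rightarrow> real) \<Rightarrow> real set"
  where "lepski_set G e dl = {k\<in>G. \<forall>k'\<in>G. k \<le> k' \<longrightarrow> norm (e k - e k') \<le> 4 * dl k'}"

context
  fixes G :: "real set" and e p :: "real \<Rightarrow> 't::real_normed_vector" and t :: 't
    and dl :: "real \<Rightarrow> real"
  assumes close: "\<forall>k\<in>G. norm (e k - p k) \<le> dl k"
    and dl_mono: "\<forall>k\<in>G. \<forall>k'\<in>G. k \<le> k' \<longrightarrow> dl k \<le> dl k'"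
    and bias_mono: "\<forall>k\<in>G. \<forall>k'\<in>G. k \<le> k' \<longrightarrow> norm (p k' - t) \<le> norm (p k - t)"
begin

lemma lepski_admissible:
  assumes "m \<in> G" "ks \<in> G" "ks \<le> m"
    and beyond: "\<forall>k\<in>G. m < k \<longrightarrow> norm (p ks - t) < dl k"
  shows "m \<in> lepski_set G e dl"
  unfolding lepski_set_def
proof (intro CollectI conjI ballI impI)
  show "m \<in> G" by fact
  fix k' assume k': "k' \<in> G" "m \<le> k'"
  show "norm (e m - e k') \<le> 4 * dl k'"
  proof (cases "k' = m")
    case True
    have "0 \<le> dl m"
      using close \<open>m \<in> G\<close> norm_ge_zero order_trans by blast
    with True show ?thesis by simp
  next
    case False
    then have large: "norm (p ks - t) < dl k'" using beyond k' by simp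
    have "norm (e m - e k') \<le> norm (e m - p m) + norm (p m - t) + norm (p k' - t) + norm (e k' - p k')"
      by (rule norm_diff_le_via_common_target)
    also have "\<dots> \<le> dl k' + norm (p ks - t) + norm (p ks - t) + dl k'"
    proof (intro add_mono)
      show "norm (e m - p m) \<le> dl k'"
        using close dl_mono assms k' by (meson order_trans)
      show "norm (p m - t) \<le> norm (p ks - t)"
        using bias_mono assms by blast
      show "norm (p k' - t) \<le> norm (p ks - t)"
        using bias_mono assms k' by (meson order_trans)
      show "norm (e k' - p k') \<le> dl k'"
        using close k' by blast
    qed
    also have "\<dots> \<le> 4 * dl k'"
      using large by linarith
    finally show ?thesis .
  qed
qed

lemma lepski_bound_at:
  assumes "finite G" "ks \<in> G"
  shows "norm (e (Min (lepski_set G e dl)) - t)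
    \<le> 5 * (dl ks + norm (p ks - t))"
proof -
  define L where "L = lepski_set G e dl"
  define b where "b = norm (p ks - t)"
  define S where "S = {k\<in>G. ks \<le> k \<and> (k = ks \<or> dl k \<le> b)}"
  define m where "m = Max S"
  have "finite S" "ks \<in> S" using assms unfolding S_def by auto
  then have "m \<in> S" and m_max: "\<And>k. k \<in> S \<Longrightarrow> k \<le> m"
    unfolding m_def using Max_in by auto
  then have m: "m \<in> G" "ks \<le> m" "m = ks \<or> dl m \<le> b" unfolding S_def by auto
  have "\<forall>k\<in>G. m < k \<longrightarrow> b < dl k"
    using m m_max unfolding S_def by force
  then have "m \<in> L"
    using lepski_admissible[of m ks] m assms unfolding L_def b_def by blast
  define kt where "kt = Min L"
  have "finite L" using assms unfolding L_def lepski_set_def by simp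
  with \<open>m \<in> L\<close> have "kt \<in> L" "kt \<le> m" unfolding kt_def using Min_in by auto
  then have kt: "kt \<in> G" "\<forall>k'\<in>G. kt \<le> k' \<longrightarrow> norm (e kt - e k') \<le> 4 * dl k'"
    unfolding L_def lepski_set_def by auto
  have close_ks: "norm (e ks - p ks) \<le> dl ks" using close assms by blast
  have "norm (e kt - t) \<le> 5 * (dl ks + b)"
  proof (cases "kt \<le> ks")
    case True
    have "norm (e kt - t) \<le> norm (e kt - e ks) + norm (e ks - p ks) + norm (p ks - t)"
      by (metis add_mono norm_diff_triangle_le order_refl)
    moreover have "norm (e kt - e ks) \<le> 4 * dl ks" using kt True assms by blast
    ultimately show ?thesis
      using close_ks norm_ge_zero[of "p ks - t"] unfolding b_def distrib_left by linarith
  next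
    case False
    then have "dl m \<le> b" using m \<open>kt \<le> m\<close> by auto
    moreover have "dl kt \<le> dl m" using dl_mono kt m \<open>kt \<le> m\<close> by blast
    moreover have "norm (p kt - t) \<le> b"
      using bias_mono kt assms False unfolding b_def by simp
    moreover have "norm (e kt - t) \<le> norm (e kt - p kt) + norm (p kt - t)"
      by (rule norm_diff_triangle_le) (rule order_refl)+
    moreover have "norm (e kt - p kt) \<le> dl kt" using close kt by blast
    moreover have "0 \<le> dl ks" using close_ks norm_ge_zero order_trans by blast
    moreover have "0 \<le> b" unfolding b_def by simp
    ultimately show ?thesis unfolding distrib_left by linarith
  qed
  then show ?thesis unfolding kt_def L_def b_def .
qed

lemma lepski_oracle_inequality:
  assumes "finite G" "G \<noteq> {}"
  shows "norm (e (Min (lepski_set G e dl)) - t)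
    \<le> 5 * (INF k\<in>G. dl k + norm (p k - t))"
proof -
  let ?err = "norm (e (Min (lepski_set G e dl)) - t)"
  have "?err / 5 \<le> (INF k\<in>G. dl k + norm (p k - t))"
    using lepski_bound_at[OF \<open>finite G\<close>] \<open>G \<noteq> {}\<close>
    by (intro cINF_greatest) (simp_all add: field_simps)
  then show ?thesis by simp
qed

end

lemma ktilde_oracle_inequality:
  assumes "finite G" "G \<noteq> {}"
    and "\<forall>k\<in>G. norm (\<psi> k Q - \<psi> k R) \<le> \<delta> k (inverse r)"
    and "\<forall>k\<in>G. \<forall>k'\<in>G. k \<le> k' \<longrightarrow> \<delta> k (inverse r) \<le> \<delta> k' (inverse r)"
    and "\<forall>k\<in>G. \<forall>k'\<in>G. k \<le> k' \<longrightarrow> norm (\<psi> k' R - t) \<le> norm (\<psi> k R - t)"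
  shows "norm (\<psi> (ktilde G \<psi> \<delta> r Q) Q - t) \<le> 5 * (INF k\<in>G. \<delta> k (inverse r) + norm (\<psi> k R - t))"
proof -
  have "Lset G \<psi> \<delta> r Q = lepski_set G (\<lambda>k. \<psi> k Q) (\<lambda>k. \<delta> k (inverse r))"
    unfolding Lset_def lepski_set_def ..
  then show ?thesis
    unfolding ktilde_def using lepski_oracle_inequality[OF assms(3-5,1,2)] by simp
qed

lemma outer_prob_mono:
  assumes "A \<subseteq> B" "B \<subseteq> space M"
  shows "outer_prob M A \<le> outer_prob M B"
  unfolding outer_prob_def
proof (rule cInf_superset_mono)
  show "{measure M C |C. C \<in> sets M \<and> B \<subseteq> C} \<noteq> {}" using assms by blast
  show "bdd_below {measure M C |C. C \<in> sets M \<and> A \<subseteq> C}"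
    by (rule bdd_belowI[of _ 0]) auto
qed (use assms in blast)

lemma big_OP_if_controlled_by_small_oP:
  assumes "small_oP M Y b"
    and control: "\<And>n \<omega>. n \<ge> start \<Longrightarrow> \<omega> \<in> space M \<Longrightarrow> \<bar>Y n \<omega>\<bar> \<le> b n \<Longrightarrow> \<bar>X n \<omega>\<bar> \<le> C * a n"
  shows "big_OP M X a"
  unfolding big_OP_def
proof (intro allI impI)
  fix \<eta> :: real assume "\<eta> > 0"
  with assms(1) obtain N where N: "\<And>n. n \<ge> N \<Longrightarrow> outer_prob M {\<omega>\<in>space M. \<bar>Y n \<omega>\<bar> > 1 * b n} < \<eta>"
    unfolding small_oP_def by (meson zero_less_one)
  show "\<exists>C N. \<forall>n\<ge>N. outer_prob M {\<omega>\<in>space M. \<bar>X n \<omega>\<bar> > C * a n} < \<eta>"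
  proof (intro exI allI impI)
    fix n assume n: "max N start \<le> n"
    have "{\<omega>\<in>space M. \<bar>X n \<omega>\<bar> > C * a n} \<subseteq> {\<omega>\<in>space M. \<bar>Y n \<omega>\<bar> > 1 * b n}"
      using control n by force
    then have "outer_prob M {\<omega>\<in>space M. \<bar>X n \<omega>\<bar> > C * a n}
        \<le> outer_prob M {\<omega>\<in>space M. \<bar>Y n \<omega>\<bar> > 1 * b n}"
      by (rule outer_prob_mono) auto
    also have "\<dots> < \<eta>" using N n by simp
    finally show "outer_prob M {\<omega>\<in>space M. \<bar>X n \<omega>\<bar> > C * a n} < \<eta>" .
  qed
qed

lemma empirical_in_discrete_probs:
  assumes "n \<ge> 1" "\<forall>i. \<omega> i \<in> Z"
  shows "empirical Z \<omega> n \<in> discrete_probs Z"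
proof -
  define S where "S = \<omega> ` {..<n}"
  define w where "w x = real (card {i. i < n \<and> \<omega> i = x}) / real n" for x
  have "finite S" unfolding S_def by simp
  have count: "card {i. i < n \<and> \<omega> i \<in> A} = (\<Sum>x\<in>S \<inter> A. card {i. i < n \<and> \<omega> i = x})" for A
  proof -
    have "(\<Sum>x\<in>S \<inter> A. card {i. i < n \<and> \<omega> i = x})
        = (\<Sum>x\<in>S \<inter> A. \<Sum>i\<in>{i. i \<in> {i. i < n \<and> \<omega> i \<in> A} \<and> \<omega> i = x}. 1)"
      by (intro sum.cong) (auto intro: arg_cong[where f = card])
    also have "\<dots> = card {i. i < n \<and> \<omega> i \<in> A}"
      using \<open>finite S\<close> by (subst sum.group) (auto simp: S_def)
    finally show ?thesis ..
  qed
  have w_sum: "infsum w (S \<inter> A) = real (card {i. i < n \<and> \<omega> i \<in> A}) / real n" for A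
    using \<open>finite S\<close> unfolding count w_def by (simp add: sum_divide_distrib)
  show ?thesis
    unfolding discrete_probs_def
  proof (intro CollectI exI conjI)
    show "countable S" using \<open>finite S\<close> by (rule countable_finite)
    show "S \<subseteq> Z" using assms unfolding S_def by auto
    show "\<forall>x\<in>S. 0 < w x"
    proof
      fix x assume "x \<in> S"
      then obtain i where "i < n" "\<omega> i = x" unfolding S_def by auto
      then have "card {i. i < n \<and> \<omega> i = x} > 0" by (subst card_gt_0_iff) auto
      then show "0 < w x" unfolding w_def using assms(1) by simp
    qed
    have "infsum w S = 1" using w_sum[of UNIV] assms(1) by simp
    then show "(w has_sum 1) S" using has_sum_finite[OF \<open>finite S\<close>, of w] \<open>finite S\<close> by simp
    show "empirical Z \<omega> n = (\<lambda>A. if A \<in> sets (borelZ Z) then infsum w (S \<inter> A) else 0)"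
      unfolding empirical_def using w_sum by auto
  qed
qed

theorem corollary1:
  fixes Z :: "'a::euclidean_space set"
    and Ms :: "'a measure set"
    and K :: "real set"
    and \<psi> :: "real \<Rightarrow> ('a set \<Rightarrow> real) \<Rightarrow> 't::real_normed_vector"
    and \<psi>0 :: "'a measure \<Rightarrow> 't"
    and D\<psi> :: "('a set \<Rightarrow> real) set"
    and d :: "('a set \<Rightarrow> real) \<Rightarrow> ('a set \<Rightarrow> real) \<Rightarrow> real"
    and \<delta> :: "real \<Rightarrow> real \<Rightarrow> real"
    and P :: "'a measure"
    and r :: "nat \<Rightarrow> real"
    and G :: "nat \<Rightarrow> real set"
  assumes Ms: "\<forall>Q\<in>Ms. prob_space Q \<and> sets Q = sets (borelZ Z)"
    and K: "K \<subseteq> {0..}" "\<forall>b. \<exists>k\<in>K. k > b"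
    and Dpsi: "setfun ` Ms \<union> discrete_probs Z \<subseteq> D\<psi>" "D\<psi> \<subseteq> ca Z"
    and reg: "\<forall>Q\<in>Ms. \<forall>\<epsilon>>0. \<exists>k0. \<forall>k\<in>K. k \<ge> k0 \<longrightarrow> norm (\<psi> k (setfun Q) - \<psi>0 Q) < \<epsilon>"
    and d_nonneg: "\<forall>x y. d x y \<ge> 0"
    and P: "P \<in> Ms"
    and cont: "\<forall>k\<in>K. modulus (\<delta> k) \<and>
        (\<forall>P'\<in>D\<psi>. norm (\<psi> k P' - \<psi> k (setfun P)) \<le> \<delta> k (d P' (setfun P)))"
    and r_pos: "\<forall>n. r n > 0"
    and r_div: "filterlim r at_top sequentially"
    and rate: "small_oP (Pi\<^sub>M UNIV (\<lambda>_::nat. P))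
        (\<lambda>n \<omega>. d (empirical Z \<omega> n) (setfun P)) (\<lambda>n. inverse (r n))"
    and bias_cont: "continuous_on K (\<lambda>k. norm (\<psi> k (setfun P) - \<psi>0 P))"
    and bias_mono: "\<forall>k\<in>K. \<forall>k'\<in>K. k \<le> k' \<longrightarrow>
        norm (\<psi> k' (setfun P) - \<psi>0 P) \<le> norm (\<psi> k (setfun P) - \<psi>0 P)"
    and delta_cont: "\<forall>n. continuous_on K (\<lambda>k. \<delta> k (inverse (r n)))"
    and delta_mono: "\<forall>n. \<forall>k\<in>K. \<forall>k'\<in>K. k \<le> k' \<longrightarrow> \<delta> k (inverse (r n)) \<le> \<delta> k' (inverse (r n))"
    and G: "\<forall>n. finite (G n) \<and> G n \<noteq> {} \<and> G n \<subseteq> K"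
  shows "big_OP (Pi\<^sub>M UNIV (\<lambda>_::nat. P))
    (\<lambda>n \<omega>. norm (\<psi> (ktilde (G n) \<psi> \<delta> (r n) (empirical Z \<omega> n)) (empirical Z \<omega> n) - \<psi>0 P))
    (\<lambda>n. INF k\<in>G n. \<delta> k (inverse (r n)) + norm (\<psi> k (setfun P) - \<psi>0 P))"
proof -
  let ?M = "Pi\<^sub>M UNIV (\<lambda>_::nat. P)"
  have "sets P = sets (borelZ Z)" using Ms P by blast
  then have "space P = Z"
    by (simp add: sets_eq_imp_space_eq space_restrict_space)
  then have sample_in_Z: "\<forall>i. \<omega> i \<in> Z" if "\<omega> \<in> space ?M" for \<omega>
    using that by (auto simp: space_PiM)
  have error_bound:
    "norm (\<psi> (ktilde (G n) \<psi> \<delta> (r n) (empirical Z \<omega> n)) (empirical Z \<omega> n) - \<psi>0 P)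
      \<le> 5 * (INF k\<in>G n. \<delta> k (inverse (r n)) + norm (\<psi> k (setfun P) - \<psi>0 P))"
    if "n \<ge> 1" "\<omega> \<in> space ?M" and dist: "d (empirical Z \<omega> n) (setfun P) \<le> inverse (r n)"
    for n \<omega>
  proof (rule ktilde_oracle_inequality[where R = "setfun P"])
    let ?Pn = "empirical Z \<omega> n"
    have "?Pn \<in> D\<psi>"
      using empirical_in_discrete_probs that(1) sample_in_Z[OF that(2)] Dpsi(1) by blast
    show "\<forall>k\<in>G n. norm (\<psi> k ?Pn - \<psi> k (setfun P)) \<le> \<delta> k (inverse (r n))"
    proof
      fix k assume "k \<in> G n"
      then have "modulus (\<delta> k)" "norm (\<psi> k ?Pn - \<psi> k (setfun P)) \<le> \<delta> k (d ?Pn (setfun P))"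
        using G cont \<open>?Pn \<in> D\<psi>\<close> by auto
      with modulus_mono[OF _ d_nonneg[rule_format] dist]
      show "norm (\<psi> k ?Pn - \<psi> k (setfun P)) \<le> \<delta> k (inverse (r n))" by fastforce
    qed
  qed (use G delta_mono bias_mono in blast)+
  \<comment> \<open>empirical Z \<omega> 0 is the zero set function (division by 0), hence start = 1\<close>
  show ?thesis
    by (rule big_OP_if_controlled_by_small_oP[OF rate, where start = 1 and C = 5])
      (simp add: error_bound)
qed

end
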